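(* Suppose the positive sequences $\{\gamma_k\}$, $\{\lambda_k\}$ satisfy Assumption (A2), and let $\{x_k\}$ be generated by the IR-IG method. Then (a) $\lim_{k\to\infty}\|x_k-x_{\lambda_{k-1}}^*\|=0$; (b) if in addition $\lim_{k\to\infty}\lambda_k=0$, then $x_k\to x_h^*$.
   Context: Standing setup: $X\subset\mathbb{R}^n$ is nonempty, compact and convex. $f_1,\dots,f_m:\mathbb{R}^n\to\mathbb{R}$ are convex (possibly nondifferentiable) functions and $f=\sum_{i=1}^m f_i$. $h:\mathbb{R}^n\to\mathbb{R}$ is strongly convex with parameter $\mu_h>0$ (possibly nondifferentiable). Let $X^*=\arg\min_{x\in X}f(x)$ and let $x_h^*$ be the unique minimizer of $h$ over $X^*$. For $\lambda>0$, $x_\lambda^*$ denotes the unique minimizer of $f+\lambda h$ over $X$. $\mathcal{P}_X$ denotes Euclidean projection onto $X$. IR-IG method: given $x_0\in X$ and positive sequences $\{\gamma_k\}$, $\{\lambda_k\}$, for each $k\ge0$ set $x_{k,0}=x_k$; for $i=0,\dots,m-1$ pick any $g_{f_{i+1}}(x_{k,i})\in\partial f_{i+1}(x_{k,i})$ and $g_h(x_{k,i})\in\partial h(x_{k,i})$ and set $x_{k,i+1}=\mathcal{P}_X\big(x_{k,i}-\gamma_k\big(g_{f_{i+1}}(x_{k,i})+\tfrac{\lambda_k}{m}g_h(x_{k,i})\big)\big)$; then set $x_{k+1}=x_{k,m}$. Assumption (A2) on $\{\gamma_k\},\{\lambda_k\}$: (a) both are non-increasing positive sequences with $\gamma_0\lambda_0\le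 2m/\mu_h$; (b) $\sum_{k=0}^\infty\gamma_k\lambda_k=\infty$; (c) $\sum_{k=1}^\infty\frac{1}{\gamma_k\lambda_k}\left(\frac{\lambda_{k-1}}{\lambda_k}-1\right)^2<\infty$; (d) $\sum_{k=0}^\infty\gamma_k^2<\infty$; (e) $\lim_{k\to\infty}\frac{1}{\gamma_k^2\lambda_k^2}\left(\frac{\lambda_{k-1}}{\lambda_k}-1\right)^2=0$; (f) $\lim_{k\to\infty}\gamma_k/\lambda_k=0$. *)

theory Defs
  imports "HOL-Analysis.Analysis"
begin

definition subdiff :: "('a::real_inner \<Rightarrow> real) \<Rightarrow> 'a \<Rightarrow> 'a set" where
  "subdiff g x = {s. \<forall>y. g y \<ge> g x + inner s (y - x)}"

definition strongly_convex :: "real \<Rightarrow> ('a::real_normed_vector \<Rightarrow> real) \<Rightarrow> bool" where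
  "strongly_convex mu g \<longleftrightarrow> (\<forall>x y t. 0 \<le> t \<and> t \<le> 1 \<longrightarrow>
      g (t *\<^sub>R x + (1 - t) *\<^sub>R y) \<le> t * g x + (1 - t) * g y - mu / 2 * t * (1 - t) * (norm (x - y))\<^sup>2)"

definition argmin_set :: "('a \<Rightarrow> real) \<Rightarrow> 'a set \<Rightarrow> 'a set" where
  "argmin_set g S = {x \<in> S. \<forall>y\<in>S. g x \<le> g y}"

text \<open>The unique minimizer of g over S (meaningful when it exists and is unique).\<close>
definition the_argmin :: "('a \<Rightarrow> real) \<Rightarrow> 'a set \<Rightarrow> 'a" where
  "the_argmin g S = (THE x. x \<in> argmin_set g S)"

end

theory Submission
  imports Defs
begin

(*
  The regularized minimizer x*_lam of f + lam h over X satisfies a quadratic growth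
  condition with modulus lam mu/4. Hence one pass of the incremental projected subgradient
  method contracts the squared distance to x*_(lam_k) by the factor 1 - gam_k lam_k mu/2, up to
  an error O(gam_k^2) caused by the subgradients being taken along the pass. Growth together
  with the Lipschitz continuity of h on X bounds the drift |x*_(lam_k) - x*_(lam_(k+1))| by a
  multiple of lam_k/lam_(k+1) - 1. Both together give a recursion
  u_(k+1) <= (1 - a_k) u_k + b_k with sum a_k = infinity and b_k/a_k -> 0 for the squared
  tracking error, which therefore vanishes: this is part (a). For lam -> 0 the regularized
  minimizers converge to the h-minimal minimizer of f (Tikhonov regularization), which gives (b).
*)

section \<open>Perturbed contractions\<close>

lemma contraction_tendsto_zero:
  fixes w a :: "nat \<Rightarrow> real"
  assumes w_nonneg: "\<And>k. w k \<ge> 0" and a_pos: "\<And>k. a k > 0"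
    and not_summable: "\<not> summable a"
    and step: "\<And>k. w (Suc k) \<le> (1 - a k) * w k"
  shows "w \<longlonglongrightarrow> 0"
proof -
  have "w (Suc k) \<le> w k" for k
  proof -
    have "0 \<le> a k * w k" using a_pos[of k] w_nonneg[of k] by simp
    then show ?thesis using step[of k] by (simp add: left_diff_distrib)
  qed
  then obtain L where lim: "w \<longlonglongrightarrow> L" and L_le: "\<And>k. L \<le> w k"
    using decseq_convergent[of w 0] w_nonneg decseq_SucI by blast
  have "L = 0"
  proof (rule ccontr)
    assume "L \<noteq> 0"
    moreover have "0 \<le> L" using LIMSEQ_le_const[OF lim] w_nonneg by blast
    ultimately have L_pos: "L > 0" by simp
    have bound: "a k \<le> (w k - w (Suc k)) / L" for k
    proof -
      have "a k * L \<le> a k * w k" using L_le a_pos[of k] by (simp add: mult_left_mono)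
      also have "\<dots> \<le> w k - w (Suc k)" using step[of k] by (simp add: algebra_simps)
      finally show ?thesis using L_pos by (simp add: le_divide_eq)
    qed
    have "summable (\<lambda>k. (w k - w (Suc k)) / L)"
      using telescope_summable'[OF lim] by (rule summable_divide)
    then have "summable a"
      by (rule summable_comparison_test') (use bound a_pos in \<open>simp add: abs_of_pos\<close>)
    with not_summable show False ..
  qed
  with lim show ?thesis by simp
qed

lemma perturbed_contraction_tendsto_zero:
  fixes u a b :: "nat \<Rightarrow> real"
  assumes u_nonneg: "\<And>k. u k \<ge> 0" and a_pos: "\<And>k. a k > 0"
    and not_summable: "\<not> summable a"
    and step: "\<And>k. k \<ge> N \<Longrightarrow> a k \<le> 1 \<and> u (Suc k) \<le> (1 - a k) * u k + b k"
    and ratio: "(\<lambda>k. b k / a k) \<longlonglongrightarrow> 0"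
  shows "u \<longlonglongrightarrow> 0"
proof (rule order_tendstoI)
  fix e :: real assume "e > 0"
  then have "e / 2 > 0" by simp
  then obtain N' where small: "\<And>k. k \<ge> N' \<Longrightarrow> b k / a k < e / 2"
    using order_tendstoD(2)[OF ratio \<open>e / 2 > 0\<close>] unfolding eventually_sequentially by blast
  define M where "M = max N N'"
  define w where "w k = max (u (k + M) - e / 2) 0" for k
  have "w \<longlonglongrightarrow> 0"
  proof (rule contraction_tendsto_zero)
    show "\<not> summable (\<lambda>k. a (k + M))"
      using not_summable summable_iff_shift[of a M] by simp
    fix k
    have "a (k + M) \<le> 1" and u_step: "u (Suc (k + M)) \<le> (1 - a (k + M)) * u (k + M) + b (k + M)"
      using step[of "k + M"] by (auto simp: M_def)
    moreover have "b (k + M) < e / 2 * a (k + M)"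
      using small[of "k + M"] a_pos[of "k + M"] by (simp add: M_def divide_less_eq)
    ultimately have "u (Suc (k + M)) - e / 2 \<le> (1 - a (k + M)) * (u (k + M) - e / 2)"
      by (simp add: algebra_simps)
    also have "\<dots> \<le> (1 - a (k + M)) * w k"
      using \<open>a (k + M) \<le> 1\<close> by (intro mult_left_mono) (auto simp: w_def)
    finally show "w (Suc k) \<le> (1 - a (k + M)) * w k"
      using \<open>a (k + M) \<le> 1\<close> by (simp add: w_def)
  qed (use a_pos in \<open>auto simp: w_def\<close>)
  then have "eventually (\<lambda>k. w k < e / 2) sequentially"
    using \<open>e / 2 > 0\<close> by (rule order_tendstoD)
  then have "eventually (\<lambda>k. u (k + M) < e) sequentially"
    by eventually_elim (auto simp: w_def max_def split: if_splits)
  then show "eventually (\<lambda>k. u k < e) sequentially"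
    by (rule eventually_sequentially_seg[THEN iffD1])
next
  fix e :: real assume "e < 0"
  then show "eventually (\<lambda>k. e < u k) sequentially"
    using u_nonneg by (auto intro: less_le_trans always_eventually)
qed

lemma contracted_square_sum_le:
  fixes a d e :: real
  assumes "0 < a" "a \<le> 1" "d \<ge> 0" "e \<ge> 0"
  shows "(1 - a) * (d + e)\<^sup>2 \<le> (1 - a / 2) * d\<^sup>2 + 3 * e\<^sup>2 / a"
proof -
  have "2 * d * e \<le> a / 2 * d\<^sup>2 + 2 / a * e\<^sup>2"
  proof -
    have "0 \<le> (a * d - 2 * e)\<^sup>2 / (2 * a)" using assms by simp
    also have "\<dots> = a / 2 * d\<^sup>2 + 2 / a * e\<^sup>2 - 2 * d * e"
      using assms by (simp add: field_simps power2_eq_square)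
    finally show ?thesis by simp
  qed
  then have "(1 - a) * (d + e)\<^sup>2 \<le> (1 - a) * ((1 + a / 2) * d\<^sup>2 + (1 + 2 / a) * e\<^sup>2)"
    using assms by (intro mult_left_mono) (auto simp: power2_eq_square algebra_simps)
  also have "\<dots> \<le> (1 - a / 2) * d\<^sup>2 + 3 * e\<^sup>2 / a"
  proof -
    have "(1 - a) * (1 + a / 2) \<le> 1 - a / 2" "(1 - a) * (1 + 2 / a) \<le> 3 / a"
      using assms by (auto simp: field_simps)
    then have "(1 - a) * (1 + a / 2) * d\<^sup>2 \<le> (1 - a / 2) * d\<^sup>2"
      and "(1 - a) * (1 + 2 / a) * e\<^sup>2 \<le> 3 / a * e\<^sup>2"
      by (intro mult_right_mono; simp)+
    moreover have "(1 - a) * ((1 + a / 2) * d\<^sup>2 + (1 + 2 / a) * e\<^sup>2)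
        = (1 - a) * (1 + a / 2) * d\<^sup>2 + (1 - a) * (1 + 2 / a) * e\<^sup>2"
      by (simp only: mult.assoc) (rule distrib_left)
    moreover have "3 / a * e\<^sup>2 = 3 * e\<^sup>2 / a" by simp
    ultimately show ?thesis by linarith
  qed
  finally show ?thesis .
qed

section \<open>Strong convexity and quadratic growth of minimizers\<close>

lemma strongly_convex_midpoint:
  assumes "strongly_convex \<mu> g"
  shows "g ((1/2) *\<^sub>R (x + y)) \<le> (g x + g y) / 2 - \<mu> / 8 * (norm (x - y))\<^sup>2"
  using assms[unfolded strongly_convex_def, rule_format, of "1/2" x y]
  by (simp add: scaleR_add_right add_divide_distrib)

lemma strongly_convex_imp_convex_on:
  assumes "strongly_convex \<mu> g" "\<mu> \<ge> 0"
  shows "convex_on UNIV g"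
proof (rule convex_onI)
  fix t :: real and x y assume t: "0 < t" "t < 1"
  have "g ((1 - t) *\<^sub>R x + t *\<^sub>R y)
        \<le> (1 - t) * g x + t * g y - \<mu> / 2 * (1 - t) * t * (norm (x - y))\<^sup>2"
    using assms(1)[unfolded strongly_convex_def, rule_format, of "1 - t" x y] t by simp
  also have "\<dots> \<le> (1 - t) * g x + t * g y"
    using t assms(2) by simp
  finally show "g ((1 - t) *\<^sub>R x + t *\<^sub>R y) \<le> (1 - t) * g x + t * g y" .
qed simp

lemma strongly_convex_add_convex:
  assumes "convex_on UNIV F" "strongly_convex \<mu> h" "l \<ge> 0"
  shows "strongly_convex (l * \<mu>) (\<lambda>y. F y + l * h y)"
  unfolding strongly_convex_def
proof (intro allI impI)
  fix x y and t :: real assume t: "0 \<le> t \<and> t \<le> 1"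
  have "F (t *\<^sub>R x + (1 - t) *\<^sub>R y) \<le> t * F x + (1 - t) * F y"
    using convex_onD[OF assms(1), of "1 - t" x y] t by simp
  moreover have "l * h (t *\<^sub>R x + (1 - t) *\<^sub>R y)
      \<le> l * (t * h x + (1 - t) * h y - \<mu> / 2 * t * (1 - t) * (norm (x - y))\<^sup>2)"
    using assms(2)[unfolded strongly_convex_def] t assms(3) by (intro mult_left_mono) auto
  ultimately show "F (t *\<^sub>R x + (1 - t) *\<^sub>R y) + l * h (t *\<^sub>R x + (1 - t) *\<^sub>R y)
      \<le> t * (F x + l * h x) + (1 - t) * (F y + l * h y) - l * \<mu> / 2 * t * (1 - t) * (norm (x - y))\<^sup>2"
    by (simp add: algebra_simps)
qed

lemma strongly_convex_argmin_growth:
  fixes g :: "'a::euclidean_space \<Rightarrow> real"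
  assumes g: "strongly_convex \<mu> g" "\<mu> > 0"
    and S: "S \<noteq> {}" "compact S" "convex S"
  shows "the_argmin g S \<in> S"
    and "\<And>y. y \<in> S \<Longrightarrow> g (the_argmin g S) + \<mu> / 4 * (norm (y - the_argmin g S))\<^sup>2 \<le> g y"
proof -
  have "continuous_on S g"
    using convex_on_continuous[OF open_UNIV strongly_convex_imp_convex_on[OF g(1)]] g(2)
    by (auto intro: continuous_on_subset)
  then obtain x0 where x0: "x0 \<in> S" "\<And>y. y \<in> S \<Longrightarrow> g x0 \<le> g y"
    using continuous_attains_inf[OF S(2,1)] by blast
  have growth: "g x0 + \<mu> / 4 * (norm (y - x0))\<^sup>2 \<le> g y" if y: "y \<in> S" for y
  proof -
    have "(1/2) *\<^sub>R (x0 + y) \<in> S"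
      using convexD[OF S(3) x0(1) y, of "1/2" "1/2"] by (simp add: scaleR_add_right)
    then have "g x0 \<le> (g x0 + g y) / 2 - \<mu> / 8 * (norm (x0 - y))\<^sup>2"
      using x0(2) strongly_convex_midpoint[OF g(1)] by (meson order_trans)
    then show ?thesis by (simp add: norm_minus_commute field_simps)
  qed
  have "the_argmin g S = x0"
    unfolding the_argmin_def
  proof (rule the_equality)
    show "x0 \<in> argmin_set g S" using x0 by (simp add: argmin_set_def)
  next
    fix x1 assume "x1 \<in> argmin_set g S"
    then have "x1 \<in> S" "g x1 \<le> g x0" using x0 by (auto simp: argmin_set_def)
    then have "\<mu> / 4 * (norm (x1 - x0))\<^sup>2 \<le> 0" using growth by fastforce
    then show "x1 = x0" using g(2) by (simp add: mult_le_0_iff)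
  qed
  then show "the_argmin g S \<in> S"
    and "\<And>y. y \<in> S \<Longrightarrow> g (the_argmin g S) + \<mu> / 4 * (norm (y - the_argmin g S))\<^sup>2 \<le> g y"
    using x0(1) growth by auto
qed

lemma argmin_set_nonempty:
  assumes "S \<noteq> {}" "compact S" "continuous_on S F"
  shows "argmin_set F S \<noteq> {}"
  using continuous_attains_inf[OF assms(2,1,3)] by (auto simp: argmin_set_def)

lemma argmin_set_eq_sublevel:
  assumes "x0 \<in> argmin_set F S"
  shows "argmin_set F S = S \<inter> {y. F y \<le> F x0}"
  using assms by (auto simp: argmin_set_def intro: order_trans)

lemma compact_argmin_set:
  assumes "compact S" "continuous_on UNIV F"
  shows "compact (argmin_set F S)"
proof (cases "argmin_set F S = {}")
  case False
  then obtain x0 where "x0 \<in> argmin_set F S" by blast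
  then show ?thesis
    unfolding argmin_set_eq_sublevel[OF \<open>x0 \<in> _\<close>]
    using assms by (intro compact_Int_closed closed_Collect_le continuous_on_const) auto
qed simp

lemma convex_argmin_set:
  assumes "convex S" "convex_on S F"
  shows "convex (argmin_set F S)"
proof (rule convexI)
  fix x y and u v :: real
  assume xy: "x \<in> argmin_set F S" "y \<in> argmin_set F S" and uv: "0 \<le> u" "0 \<le> v" "u + v = 1"
  then have "x \<in> S" "y \<in> S" by (auto simp: argmin_set_def)
  then have in_S: "u *\<^sub>R x + v *\<^sub>R y \<in> S" using convexD[OF assms(1)] uv by blast
  have "F (u *\<^sub>R x + v *\<^sub>R y) \<le> F z" if "z \<in> S" for z
  proof -
    have "F (u *\<^sub>R x + v *\<^sub>R y) \<le> u * F x + v * F y"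
      using convex_onD[OF assms(2), of v x y] \<open>x \<in> S\<close> \<open>y \<in> S\<close> uv
      by (simp add: eq_diff_eq[symmetric])
    also have "\<dots> \<le> u * F z + v * F z"
      using xy that uv by (intro add_mono mult_left_mono) (auto simp: argmin_set_def)
    finally show ?thesis using uv by (simp add: distrib_right[symmetric])
  qed
  then show "u *\<^sub>R x + v *\<^sub>R y \<in> argmin_set F S"
    using in_S by (simp add: argmin_set_def)
qed

section \<open>Convex functions on compact sets\<close>

lemma convex_on_sum_functions:
  assumes "convex S" "finite I" "\<And>i. i \<in> I \<Longrightarrow> convex_on S (f i)"
  shows "convex_on S (\<lambda>x. \<Sum>i\<in>I. f i x)"
  using assms(2,3) by (induction I rule: finite_induct) (auto simp: convex_on_const assms(1))

lemma subdiff_norm_le: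
  fixes g :: "'a::real_inner \<Rightarrow> real"
  assumes bound: "\<And>u. norm u \<le> 1 \<Longrightarrow> \<bar>g (x + u)\<bar> \<le> M" and s: "s \<in> subdiff g x"
  shows "norm s \<le> 2 * M"
proof (cases "s = 0")
  case True
  then show ?thesis using bound[of 0] by simp
next
  case False
  define u where "u = (1 / norm s) *\<^sub>R s"
  have "norm u \<le> 1" "inner s u = norm s"
    using False by (simp_all add: u_def inner_scaleR_right dot_square_norm power2_eq_square)
  moreover have "g (x + u) \<ge> g x + inner s u"
    using s unfolding subdiff_def by (auto dest: spec[of _ "x + u"])
  ultimately show ?thesis using bound[of u] bound[of 0] by simp
qed

lemma convex_on_increment_le_of_bounded:
  fixes g :: "'a::real_normed_vector \<Rightarrow> real"
  assumes cvx: "convex_on UNIV g" and "M \<ge> 0"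
    and bound: "\<And>x u. x \<in> X \<Longrightarrow> norm u \<le> 1 \<Longrightarrow> \<bar>g (x + u)\<bar> \<le> M"
    and a: "a \<in> X" and b: "b \<in> X"
  shows "g b - g a \<le> 2 * M * norm (a - b)"
proof -
  define r where "r = norm (a - b)"
  have "\<bar>g a\<bar> \<le> M" "\<bar>g b\<bar> \<le> M" using bound[of a 0] bound[of b 0] a b by simp_all
  consider "r \<ge> 1" | "0 < r" "r < 1" | "r = 0"
    using norm_ge_zero[of "a - b"] unfolding r_def by linarith
  then show ?thesis
  proof cases
    case 1
    have "g b - g a \<le> 2 * M" using \<open>\<bar>g a\<bar> \<le> M\<close> \<open>\<bar>g b\<bar> \<le> M\<close> by linarith
    also have "\<dots> \<le> 2 * M * r" using 1 \<open>M \<ge> 0\<close> by (simp add: mult_le_cancel_left1)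
    finally show ?thesis by (simp add: r_def)
  next
    case 2
    \<comment> \<open>b lies on the segment from a to the point w at distance 1 from a\<close>
    define w where "w = a + (1 / r) *\<^sub>R (b - a)"
    have "norm ((1 / r) *\<^sub>R (b - a)) = 1"
      using 2 norm_minus_commute[of b a] by (simp add: r_def)
    then have "\<bar>g w\<bar> \<le> M"
      using bound[of a "(1 / r) *\<^sub>R (b - a)"] a by (simp add: w_def)
    have "r *\<^sub>R w = r *\<^sub>R a + (b - a)"
      using 2 by (simp add: w_def scaleR_add_right)
    then have "b = (1 - r) *\<^sub>R a + r *\<^sub>R w" by (simp add: algebra_simps)
    then have "g b \<le> (1 - r) * g a + r * g w"
      using 2 convex_onD[OF cvx, of r a w] by simp
    then have "g b - g a \<le> r * (g w - g a)" by (simp add: algebra_simps)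
    also have "\<dots> \<le> r * (2 * M)"
      using \<open>\<bar>g a\<bar> \<le> M\<close> \<open>\<bar>g w\<bar> \<le> M\<close> 2 by (intro mult_left_mono) auto
    finally show ?thesis by (simp add: r_def mult_ac)
  next
    case 3
    then show ?thesis by (simp add: r_def)
  qed
qed

lemma convex_on_lipschitz_on_of_bounded:
  fixes g :: "'a::real_normed_vector \<Rightarrow> real"
  assumes cvx: "convex_on UNIV g" and "M \<ge> 0"
    and bound: "\<And>x u. x \<in> X \<Longrightarrow> norm u \<le> 1 \<Longrightarrow> \<bar>g (x + u)\<bar> \<le> M"
  shows "(2 * M)-lipschitz_on X g"
proof (rule lipschitz_onI)
  fix a b assume ab: "a \<in> X" "b \<in> X"
  show "dist (g a) (g b) \<le> 2 * M * dist a b"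
    using convex_on_increment_le_of_bounded[OF cvx \<open>M \<ge> 0\<close> bound ab]
      convex_on_increment_le_of_bounded[OF cvx \<open>M \<ge> 0\<close> bound ab(2,1)] norm_minus_commute[of a b]
    unfolding dist_norm dist_real_def by (simp add: abs_le_iff)
qed (use \<open>M \<ge> 0\<close> in simp)

lemma convex_on_compact_bounds:
  fixes g :: "'a::euclidean_space \<Rightarrow> real"
  assumes cvx: "convex_on UNIV g" and X: "compact X"
  obtains L where "L-lipschitz_on X g" "\<And>x s. x \<in> X \<Longrightarrow> s \<in> subdiff g x \<Longrightarrow> norm s \<le> L"
proof -
  define K where "K = {x + u | x u. x \<in> X \<and> u \<in> cball (0::'a) 1}"
  have "compact K" unfolding K_def by (intro compact_sums X compact_cball)
  moreover have "continuous_on K g"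
    using convex_on_continuous[OF open_UNIV cvx] by (rule continuous_on_subset) simp
  ultimately have "bounded (g ` K)"
    by (intro compact_imp_bounded compact_continuous_image)
  then obtain M0 where M0: "\<And>y. y \<in> K \<Longrightarrow> \<bar>g y\<bar> \<le> M0"
    unfolding bounded_real by blast
  define M where "M = max M0 0"
  have M: "\<And>y. y \<in> K \<Longrightarrow> \<bar>g y\<bar> \<le> M" "M \<ge> 0"
    using M0 by (auto simp: M_def le_max_iff_disj)
  have bound: "\<bar>g (x + u)\<bar> \<le> M" if "x \<in> X" "norm u \<le> 1" for x u
  proof -
    have "x + u \<in> K" using that unfolding K_def by auto
    then show ?thesis by (rule M(1))
  qed
  show ?thesis
  proof (rule that)
    show "(2 * M)-lipschitz_on X g"
      using convex_on_lipschitz_on_of_bounded[OF cvx M(2) bound] .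
    show "norm s \<le> 2 * M" if "x \<in> X" "s \<in> subdiff g x" for x s
      using subdiff_norm_le[of g x M s] bound that by blast
  qed
qed

lemma convex_family_compact_bounds:
  fixes g :: "'i \<Rightarrow> 'a::euclidean_space \<Rightarrow> real"
  assumes "finite I" "\<And>i. i \<in> I \<Longrightarrow> convex_on UNIV (g i)" "compact X"
  obtains L where "L \<ge> 0"
    "\<And>i. i \<in> I \<Longrightarrow> L-lipschitz_on X (g i)"
    "\<And>i x s. i \<in> I \<Longrightarrow> x \<in> X \<Longrightarrow> s \<in> subdiff (g i) x \<Longrightarrow> norm s \<le> L"
proof -
  have "\<forall>i\<in>I. \<exists>L. L-lipschitz_on X (g i) \<and> (\<forall>x\<in>X. \<forall>s\<in>subdiff (g i) x. norm s \<le> L)"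
  proof
    fix i assume "i \<in> I"
    with assms(2,3) obtain L where "L-lipschitz_on X (g i)"
      "\<And>x s. x \<in> X \<Longrightarrow> s \<in> subdiff (g i) x \<Longrightarrow> norm s \<le> L"
      using convex_on_compact_bounds by blast
    then show "\<exists>L. L-lipschitz_on X (g i) \<and> (\<forall>x\<in>X. \<forall>s\<in>subdiff (g i) x. norm s \<le> L)"
      by blast
  qed
  from bchoice[OF this] obtain Lg where
    Lg: "\<forall>i\<in>I. (Lg i)-lipschitz_on X (g i) \<and> (\<forall>x\<in>X. \<forall>s\<in>subdiff (g i) x. norm s \<le> Lg i)"
    by blast
  have Lg_le: "Lg i \<le> sum Lg I" if "i \<in> I" for i
  proof (rule member_le_sum[OF that _ assms(1)])
    show "0 \<le> Lg j" if "j \<in> I - {i}" for j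
      using Lg that lipschitz_on_nonneg by blast
  qed
  show ?thesis
  proof (rule that)
    show "sum Lg I \<ge> 0"
      using Lg lipschitz_on_nonneg by (intro sum_nonneg) blast
    show "(sum Lg I)-lipschitz_on X (g i)" if "i \<in> I" for i
      using Lg that Lg_le[OF that] by (blast intro: lipschitz_on_mono)
    show "norm s \<le> sum Lg I" if "i \<in> I" "x \<in> X" "s \<in> subdiff (g i) x" for i x s
      using Lg that Lg_le[OF that(1)] by (meson order_trans)
  qed
qed

section \<open>Projected incremental subgradient passes\<close>

lemma projected_subgradient_step:
  fixes X :: "'a::euclidean_space set"
  assumes X: "closed X" "convex X" "X \<noteq> {}" and "y \<in> X" "t \<ge> 0"
    and sub: "\<phi> y \<ge> \<phi> z + inner s (y - z)"
  shows "(norm (closest_point X (z - t *\<^sub>R s) - y))\<^sup>2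
         \<le> (norm (z - y))\<^sup>2 - 2 * t * (\<phi> z - \<phi> y) + t\<^sup>2 * (norm s)\<^sup>2"
proof -
  have "norm (closest_point X (z - t *\<^sub>R s) - y)
        = dist (closest_point X (z - t *\<^sub>R s)) (closest_point X y)"
    using closest_point_self[OF \<open>y \<in> X\<close>] by (simp add: dist_norm)
  also have "\<dots> \<le> dist (z - t *\<^sub>R s) y"
    by (rule closest_point_lipschitz[OF X(2,1,3)])
  also have "\<dots> = norm ((z - y) - t *\<^sub>R s)"
    by (simp add: dist_norm algebra_simps)
  finally have "(norm (closest_point X (z - t *\<^sub>R s) - y))\<^sup>2 \<le> (norm ((z - y) - t *\<^sub>R s))\<^sup>2"
    by (simp add: power_mono)
  also have "\<dots> = inner (z - y) (z - y) - 2 * t * inner s (z - y) + t\<^sup>2 * inner s s"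
    unfolding power2_norm_eq_inner
    by (simp add: inner_diff_left inner_diff_right inner_commute power2_eq_square algebra_simps)
  also have "\<dots> = (norm (z - y))\<^sup>2 - 2 * t * inner s (z - y) + t\<^sup>2 * (norm s)\<^sup>2"
    by (simp add: power2_norm_eq_inner)
  also have "\<dots> \<le> (norm (z - y))\<^sup>2 - 2 * t * (\<phi> z - \<phi> y) + t\<^sup>2 * (norm s)\<^sup>2"
  proof -
    have "\<phi> z - \<phi> y \<le> inner s (z - y)"
      using sub by (simp add: inner_diff_right)
    then show ?thesis using \<open>t \<ge> 0\<close> by (simp add: mult_left_mono)
  qed
  finally show ?thesis .
qed

context
  fixes X :: "'a::euclidean_space set" and \<phi> :: "nat \<Rightarrow> 'a \<Rightarrow> real"
    and s z :: "nat \<Rightarrow> 'a" and t G :: real and n :: nat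
  assumes X: "closed X" "convex X" "X \<noteq> {}" and z0: "z 0 \<in> X" and t: "t \<ge> 0"
    and s_bound: "\<And>i. i < n \<Longrightarrow> norm (s i) \<le> G"
    and lipschitz: "\<And>i. i < n \<Longrightarrow> G-lipschitz_on X (\<phi> i)"
    and subgradient: "\<And>i y. i < n \<Longrightarrow> \<phi> i y \<ge> \<phi> i (z i) + inner (s i) (y - z i)"
    and step: "\<And>i. i < n \<Longrightarrow> z (Suc i) = closest_point X (z i - t *\<^sub>R s i)"
begin

lemma incremental_pass_displacement:
  "j \<le> n \<Longrightarrow> z j \<in> X \<and> norm (z j - z 0) \<le> j * t * G"
proof (induction j)
  case (Suc j)
  then have "j < n" "z j \<in> X" "norm (z j - z 0) \<le> j * t * G" by auto
  have "norm (z (Suc j) - z j) \<le> dist (z j - t *\<^sub>R s j) (z j)"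
    using closest_point_lipschitz[OF X(2,1,3), of "z j - t *\<^sub>R s j" "z j"]
    by (simp add: step[OF \<open>j < n\<close>] closest_point_self[OF \<open>z j \<in> X\<close>] dist_norm)
  also have "\<dots> \<le> t * G"
    using s_bound[OF \<open>j < n\<close>] t by (simp add: dist_norm mult_left_mono)
  finally have "norm (z (Suc j) - z 0) \<le> t * G + j * t * G"
    using norm_triangle_ineq[of "z (Suc j) - z j" "z j - z 0"] \<open>norm (z j - z 0) \<le> _\<close> by simp
  then show ?case
    using closest_point_in_set[OF X(1,3)] step[OF \<open>j < n\<close>] by (simp add: algebra_simps)
qed (use z0 in simp)

lemma incremental_pass_inequality:
  assumes "y \<in> X"
  shows "(norm (z n - y))\<^sup>2
         \<le> (norm (z 0 - y))\<^sup>2 - 2 * t * (\<Sum>i<n. \<phi> i (z 0) - \<phi> i y) + real n * (2 * real n + 1) * t\<^sup>2 * G\<^sup>2"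
proof -
  have "(norm (z j - y))\<^sup>2
        \<le> (norm (z 0 - y))\<^sup>2 - 2 * t * (\<Sum>i<j. \<phi> i (z 0) - \<phi> i y) + real j * (2 * real n + 1) * t\<^sup>2 * G\<^sup>2"
    if "j \<le> n" for j
    using that
  proof (induction j)
    case (Suc j)
    then have j: "j < n" by simp
    have "z j \<in> X" and near: "norm (z j - z 0) \<le> j * t * G"
      using incremental_pass_displacement[of j] j by auto
    have "G \<ge> 0" using lipschitz_on_nonneg[OF lipschitz[OF j]] .
    \<comment> \<open>the subgradient is taken at z j, not at the start z 0 of the pass\<close>
    have "\<phi> j (z 0) - \<phi> j (z j) \<le> G * (j * t * G)"
      using lipschitz_onD[OF lipschitz[OF j] z0 \<open>z j \<in> X\<close>] near \<open>G \<ge> 0\<close>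
      by (smt (verit) dist_norm dist_real_def mult_left_mono norm_minus_commute)
    also have "\<dots> = j * (t * G\<^sup>2)"
      by (simp add: power2_eq_square)
    also have "\<dots> \<le> n * (t * G\<^sup>2)"
      using j t by (intro mult_right_mono) auto
    finally have "2 * t * (\<phi> j (z 0) - \<phi> j (z j)) \<le> 2 * t * (n * (t * G\<^sup>2))"
      using t by (simp add: mult_left_mono)
    moreover have "(norm (z (Suc j) - y))\<^sup>2
        \<le> (norm (z j - y))\<^sup>2 - 2 * t * (\<phi> j (z j) - \<phi> j y) + t\<^sup>2 * (norm (s j))\<^sup>2"
      unfolding step[OF j] using projected_subgradient_step[OF X assms t subgradient[OF j]] .
    moreover have "t\<^sup>2 * (norm (s j))\<^sup>2 \<le> t\<^sup>2 * G\<^sup>2"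
      using s_bound[OF j] by (simp add: mult_left_mono power_mono)
    moreover have "2 * t * (n * (t * G\<^sup>2)) + t\<^sup>2 * G\<^sup>2 = (2 * real n + 1) * t\<^sup>2 * G\<^sup>2"
      by (simp add: power2_eq_square algebra_simps)
    moreover have "2 * t * (\<phi> j (z 0) - \<phi> j y)
        = 2 * t * (\<phi> j (z 0) - \<phi> j (z j)) + 2 * t * (\<phi> j (z j) - \<phi> j y)"
      by (simp add: algebra_simps)
    moreover have "real (Suc j) * (2 * real n + 1) * t\<^sup>2 * G\<^sup>2
        = real j * (2 * real n + 1) * t\<^sup>2 * G\<^sup>2 + (2 * real n + 1) * t\<^sup>2 * G\<^sup>2"
      by (simp add: algebra_simps)
    moreover have "2 * t * (\<Sum>i<Suc j. \<phi> i (z 0) - \<phi> i y)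
        = 2 * t * (\<Sum>i<j. \<phi> i (z 0) - \<phi> i y) + 2 * t * (\<phi> j (z 0) - \<phi> j y)"
      by (simp add: distrib_left)
    ultimately show ?case
      using Suc.IH j by linarith
  qed simp
  then show ?thesis by simp
qed

end

section \<open>Tikhonov regularization\<close>

lemma regularized_minimizers_drift:
  fixes F h :: "'a::real_normed_vector \<Rightarrow> real"
  assumes l: "0 < l2" "l2 \<le> l1" and "c > 0" and "y1 \<in> X" "y2 \<in> X"
    and min1: "\<And>y. y \<in> X \<Longrightarrow> F y1 + l1 * h y1 + l1 * c * (norm (y - y1))\<^sup>2 \<le> F y + l1 * h y"
    and min2: "\<And>y. y \<in> X \<Longrightarrow> F y2 + l2 * h y2 + l2 * c * (norm (y - y2))\<^sup>2 \<le> F y + l2 * h y"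
    and lip: "L-lipschitz_on X h"
  shows "norm (y1 - y2) \<le> L / c * (l1 / l2 - 1)"
proof -
  define n where "n = norm (y1 - y2)"
  have "(l1 + l2) * c * n\<^sup>2 \<le> (l1 - l2) * (h y2 - h y1)"
    using min1[OF \<open>y2 \<in> X\<close>] min2[OF \<open>y1 \<in> X\<close>]
    by (simp add: n_def norm_minus_commute algebra_simps)
  also have "\<dots> \<le> (l1 - l2) * (L * n)"
    using lipschitz_onD[OF lip \<open>y2 \<in> X\<close> \<open>y1 \<in> X\<close>] l
    by (intro mult_left_mono) (auto simp: n_def dist_norm dist_real_def norm_minus_commute)
  finally have "(l1 + l2) * c * n\<^sup>2 \<le> (l1 - l2) * (L * n)" .
  moreover have "l2 * c * n\<^sup>2 \<le> (l1 + l2) * c * n\<^sup>2"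
    using \<open>c > 0\<close> l by (intro mult_right_mono) auto
  moreover have "l2 * c * n\<^sup>2 = (l2 * c * n) * n" "(l1 - l2) * (L * n) = ((l1 - l2) * L) * n"
    by (simp_all add: power2_eq_square)
  ultimately have "(l2 * c * n) * n \<le> ((l1 - l2) * L) * n" by linarith
  then have "n = 0 \<or> n * (l2 * c) \<le> (l1 - l2) * L"
    by (cases "n = 0") (auto simp: n_def mult_ac)
  moreover have "L / c * (l1 / l2 - 1) = (l1 - l2) * L / (l2 * c)"
    using \<open>c > 0\<close> l by (simp add: field_simps)
  moreover have "0 \<le> (l1 - l2) * L / (l2 * c)"
    using lipschitz_on_nonneg[OF lip] \<open>c > 0\<close> l by simp
  ultimately show ?thesis
    using \<open>c > 0\<close> l by (auto simp: n_def pos_le_divide_eq)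
qed

context
  fixes F h :: "'a::euclidean_space \<Rightarrow> real" and X :: "'a set" and ys :: "nat \<Rightarrow> 'a"
    and lam :: "nat \<Rightarrow> real" and p :: 'a
  assumes X: "compact X" and cont: "continuous_on X F" "continuous_on X h"
    and ys: "\<And>k. ys k \<in> X" "\<And>k y. y \<in> X \<Longrightarrow> F (ys k) + lam k * h (ys k) \<le> F y + lam k * h y"
    and lam: "lam \<longlonglongrightarrow> 0" "\<And>k. lam k > 0"
    and p: "p \<in> argmin_set F X"
    and p_unique: "\<And>q. q \<in> argmin_set F X \<Longrightarrow> h q \<le> h p \<Longrightarrow> q = p"
begin

lemma tikhonov_limit_point:
  assumes t: "strict_mono t" and lim: "(ys \<circ> t) \<longlonglongrightarrow> l"
  shows "l = p"
proof -
  have "l \<in> X"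
    using closed_sequentially[OF compact_imp_closed[OF X] _ lim] ys(1) by simp
  have h_lim: "(\<lambda>k. h (ys (t k))) \<longlonglongrightarrow> h l" and F_lim: "(\<lambda>k. F (ys (t k))) \<longlonglongrightarrow> F l"
    using continuous_on_tendsto_compose[OF cont(2) lim \<open>l \<in> X\<close>]
      continuous_on_tendsto_compose[OF cont(1) lim \<open>l \<in> X\<close>] ys(1)
    by (simp_all add: comp_def)
  have lam_t: "(\<lambda>k. lam (t k)) \<longlonglongrightarrow> 0"
    using LIMSEQ_subseq_LIMSEQ[OF lam(1) t] by (simp add: comp_def)
  have h_le: "h (ys k) \<le> h p" for k
  proof -
    have "F p \<le> F (ys k)" "F (ys k) + lam k * h (ys k) \<le> F p + lam k * h p"
      using ys(1)[of k] ys(2)[of p k] p by (auto simp: argmin_set_def)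
    then have "lam k * h (ys k) \<le> lam k * h p" by linarith
    then show ?thesis using lam(2)[of k] by simp
  qed
  have "h l \<le> h p"
    using LIMSEQ_le_const2[OF h_lim] h_le by blast
  moreover have "F l \<le> F y" if "y \<in> X" for y
  proof -
    have "(\<lambda>k. F (ys (t k)) + lam (t k) * h (ys (t k))) \<longlonglongrightarrow> F l + 0 * h l"
      "(\<lambda>k. F y + lam (t k) * h y) \<longlonglongrightarrow> F y + 0 * h y"
      by (intro tendsto_add tendsto_mult tendsto_const F_lim lam_t h_lim)+
    from LIMSEQ_le[OF this] show ?thesis using ys(2) that by simp
  qed
  ultimately show "l = p"
    using p_unique \<open>l \<in> X\<close> by (simp add: argmin_set_def)
qed

lemma tikhonov_minimizers_tendsto: "ys \<longlonglongrightarrow> p"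
proof (rule ccontr)
  assume "\<not> ys \<longlonglongrightarrow> p"
  then obtain e where "e > 0" "frequently (\<lambda>k. e \<le> dist (ys k) p) sequentially"
    unfolding tendsto_iff by (auto simp: not_eventually not_less)
  then have "infinite {k. e \<le> dist (ys k) p}"
    by (simp add: cofinite_eq_sequentially[symmetric] frequently_cofinite)
  from infinite_enumerate[OF this] obtain r :: "nat \<Rightarrow> nat"
    where r: "strict_mono r" "\<And>k. e \<le> dist (ys (r k)) p" by blast
  have "\<forall>k. (ys \<circ> r) k \<in> X" using ys(1) by simp
  then obtain l s where "l \<in> X" "strict_mono s" "((ys \<circ> r) \<circ> s) \<longlonglongrightarrow> l"
    using compact_imp_seq_compact[OF X] unfolding seq_compact_def by blast
  then have "l = p" using tikhonov_limit_point[of "r \<circ> s" l] r(1) by (simp add: strict_mono_o o_assoc)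
  have "(\<lambda>k. dist (ys (r (s k))) p) \<longlonglongrightarrow> dist l p"
    using \<open>((ys \<circ> r) \<circ> s) \<longlonglongrightarrow> l\<close> by (auto intro!: tendsto_intros simp: comp_def)
  then have "e \<le> dist l p" using LIMSEQ_le_const r(2) by blast
  with \<open>e > 0\<close> \<open>l = p\<close> show False by simp
qed

end

section \<open>The IR-IG method\<close>

locale ir_ig =
  fixes X :: "'a::euclidean_space set" and m :: nat and f :: "nat \<Rightarrow> 'a \<Rightarrow> real"
    and h :: "'a \<Rightarrow> real" and \<mu> :: real and gam lam :: "nat \<Rightarrow> real"
    and x :: "nat \<Rightarrow> 'a" and z gf gh :: "nat \<Rightarrow> nat \<Rightarrow> 'a"
  assumes X: "X \<noteq> {}" "compact X" "convex X"
    and m: "m \<ge> 1"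
    and f_cvx: "\<And>i. i < m \<Longrightarrow> convex_on UNIV (f i)"
    and mu_pos: "\<mu> > 0"
    and h_sc: "strongly_convex \<mu> h"
    and gamma_pos: "\<And>k. gam k > 0"
    and lambda_pos: "\<And>k. lam k > 0"
    and lambda_mono: "decseq lam"
    and x0: "x 0 \<in> X"
    and z0: "\<And>k. z k 0 = x k"
    and gf: "\<And>k i. i < m \<Longrightarrow> gf k i \<in> subdiff (f i) (z k i)"
    and gh: "\<And>k i. i < m \<Longrightarrow> gh k i \<in> subdiff h (z k i)"
    and zstep: "\<And>k i. i < m \<Longrightarrow> z k (Suc i) =
        closest_point X (z k i - gam k *\<^sub>R (gf k i + (lam k / real m) *\<^sub>R gh k i))"
    and xstep: "\<And>k. x (Suc k) = z k m"
begin

abbreviation F :: "'a \<Rightarrow> real" where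
  "F y \<equiv> \<Sum>i<m. f i y"

(* reg_min k and h_min are the points written x*_(lam_k) and x*_h in the paper. *)

definition reg_min :: "nat \<Rightarrow> 'a" where
  "reg_min k = the_argmin (\<lambda>y. F y + lam k * h y) X"

definition h_min :: 'a where
  "h_min = the_argmin h (argmin_set F X)"

lemma closed_X: "closed X"
  using X(2) by (rule compact_imp_closed)

lemma F_convex: "convex_on UNIV F"
  using f_cvx by (intro convex_on_sum_functions) auto

lemma h_convex: "convex_on UNIV h"
  using strongly_convex_imp_convex_on[OF h_sc] mu_pos by simp

lemma F_continuous: "continuous_on UNIV F"
  using convex_on_continuous[OF open_UNIV F_convex] .

lemma h_continuous: "continuous_on UNIV h"
  using convex_on_continuous[OF open_UNIV h_convex] .

lemma reg_min_growth:
  shows "reg_min k \<in> X"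
    and "\<And>y. y \<in> X \<Longrightarrow> F (reg_min k) + lam k * h (reg_min k) + lam k * (\<mu> / 4) * (norm (y - reg_min k))\<^sup>2
                         \<le> F y + lam k * h y"
proof -
  have sc: "strongly_convex (lam k * \<mu>) (\<lambda>y. F y + lam k * h y)"
    using strongly_convex_add_convex[OF F_convex h_sc] lambda_pos[of k] by simp
  have pos: "lam k * \<mu> > 0" using lambda_pos[of k] mu_pos by simp
  show "reg_min k \<in> X"
    unfolding reg_min_def by (rule strongly_convex_argmin_growth(1)[OF sc pos X])
  show "F (reg_min k) + lam k * h (reg_min k) + lam k * (\<mu> / 4) * (norm (y - reg_min k))\<^sup>2
        \<le> F y + lam k * h y" if "y \<in> X" for y
    using strongly_convex_argmin_growth(2)[OF sc pos X that] by (simp add: reg_min_def)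
qed

lemma h_min_growth:
  shows "h_min \<in> argmin_set F X"
    and "\<And>q. q \<in> argmin_set F X \<Longrightarrow> h h_min + \<mu> / 4 * (norm (q - h_min))\<^sup>2 \<le> h q"
proof -
  have "argmin_set F X \<noteq> {}" "compact (argmin_set F X)" "convex (argmin_set F X)"
    using argmin_set_nonempty[OF X(1,2)] compact_argmin_set[OF X(2) F_continuous]
      convex_argmin_set[OF X(3) convex_on_subset[OF F_convex subset_UNIV X(3)]] F_continuous
    by (auto intro: continuous_on_subset)
  then show "h_min \<in> argmin_set F X"
    and "\<And>q. q \<in> argmin_set F X \<Longrightarrow> h h_min + \<mu> / 4 * (norm (q - h_min))\<^sup>2 \<le> h q"
    unfolding h_min_def using strongly_convex_argmin_growth[OF h_sc mu_pos] by auto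
qed

lemma z_Suc_in_X: "i < m \<Longrightarrow> z k (Suc i) \<in> X"
  using zstep closest_point_in_set[OF closed_X X(1)] by simp

lemma x_in_X: "x k \<in> X"
proof (cases k)
  case (Suc j)
  have "z j (Suc (m - 1)) \<in> X" using m by (intro z_Suc_in_X) simp
  then show ?thesis using Suc m xstep by simp
qed (use x0 in simp)

lemma z_in_X: "i \<le> m \<Longrightarrow> z k i \<in> X"
  using z0 x_in_X z_Suc_in_X by (cases i) auto

lemma component_subgradient:
  assumes "i < m"
  shows "f i y + lam k / m * h y
         \<ge> f i (z k i) + lam k / m * h (z k i) + inner (gf k i + (lam k / m) *\<^sub>R gh k i) (y - z k i)"
proof -
  have "f i y \<ge> f i (z k i) + inner (gf k i) (y - z k i)"
    "h y \<ge> h (z k i) + inner (gh k i) (y - z k i)"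
    using gf[OF assms] gh[OF assms] by (auto simp: subdiff_def)
  moreover have "lam k / m \<ge> 0" using lambda_pos[of k] by simp
  ultimately have "lam k / m * (h (z k i) + inner (gh k i) (y - z k i)) \<le> lam k / m * h y"
    by (intro mult_left_mono)
  then have "lam k / m * h (z k i) + lam k / m * inner (gh k i) (y - z k i) \<le> lam k / m * h y"
    by (simp only: distrib_left)
  with \<open>f i y \<ge> _\<close> show ?thesis by (simp add: inner_add_left)
qed

lemma component_bounds:
  obtains G where "G \<ge> 0"
    "\<And>k i. i < m \<Longrightarrow> norm (gf k i + (lam k / m) *\<^sub>R gh k i) \<le> G"
    "\<And>k i. i < m \<Longrightarrow> G-lipschitz_on X (\<lambda>y. f i y + lam k / m * h y)"
proof -
  obtain Lf where Lf: "Lf \<ge> 0" "\<And>i. i < m \<Longrightarrow> Lf-lipschitz_on X (f i)"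
    "\<And>i x s. i < m \<Longrightarrow> x \<in> X \<Longrightarrow> s \<in> subdiff (f i) x \<Longrightarrow> norm s \<le> Lf"
    using convex_family_compact_bounds[of "{..<m}" f X] f_cvx X(2) by auto
  obtain Lh where Lh: "Lh-lipschitz_on X h"
    "\<And>x s. x \<in> X \<Longrightarrow> s \<in> subdiff h x \<Longrightarrow> norm s \<le> Lh"
    using convex_on_compact_bounds[OF h_convex X(2)] by blast
  have c: "0 \<le> lam k / m" "lam k / m \<le> lam 0" for k
  proof -
    show "0 \<le> lam k / m" using lambda_pos[of k] by simp
    have "lam k / m \<le> lam k" using m lambda_pos[of k] by (simp add: divide_le_eq)
    also have "\<dots> \<le> lam 0" using lambda_mono by (simp add: decseq_def)
    finally show "lam k / m \<le> lam 0" .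
  qed
  show ?thesis
  proof (rule that)
    show "0 \<le> Lf + lam 0 * Lh"
      using Lf(1) lipschitz_on_nonneg[OF Lh(1)] lambda_pos[of 0] by simp
  next
    fix k i assume "i < m"
    then have "z k i \<in> X" by (simp add: z_in_X)
    have "norm ((lam k / m) *\<^sub>R gh k i) = lam k / m * norm (gh k i)"
      using lambda_pos[of k] by simp
    then have "norm (gf k i + (lam k / m) *\<^sub>R gh k i) \<le> norm (gf k i) + lam k / m * norm (gh k i)"
      using norm_triangle_ineq[of "gf k i" "(lam k / m) *\<^sub>R gh k i"] by linarith
    also have "\<dots> \<le> Lf + lam 0 * Lh"
      using Lf(3)[OF \<open>i < m\<close> \<open>z k i \<in> X\<close> gf[OF \<open>i < m\<close>]] Lh(2)[OF \<open>z k i \<in> X\<close> gh[OF \<open>i < m\<close>]] c[of k]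
      by (intro add_mono mult_mono) auto
    finally show "norm (gf k i + (lam k / m) *\<^sub>R gh k i) \<le> Lf + lam 0 * Lh" .
    show "(Lf + lam 0 * Lh)-lipschitz_on X (\<lambda>y. f i y + lam k / m * h y)"
      using c[of k] by (intro lipschitz_on_add Lf(2)[OF \<open>i < m\<close>] lipschitz_on_cmult_real_upper Lh(1)) auto
  qed
qed

lemma epoch_inequality:
  obtains C where "C \<ge> 0"
    "\<And>k y. y \<in> X \<Longrightarrow> (norm (x (Suc k) - y))\<^sup>2
       \<le> (norm (x k - y))\<^sup>2 - 2 * gam k * ((F (x k) + lam k * h (x k)) - (F y + lam k * h y)) + C * (gam k)\<^sup>2"
proof -
  obtain G where G: "G \<ge> 0"
    "\<And>k i. i < m \<Longrightarrow> norm (gf k i + (lam k / m) *\<^sub>R gh k i) \<le> G"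
    "\<And>k i. i < m \<Longrightarrow> G-lipschitz_on X (\<lambda>y. f i y + lam k / m * h y)"
    using component_bounds by blast
  show ?thesis
  proof (rule that)
    show "0 \<le> real m * (2 * real m + 1) * G\<^sup>2" by simp
  next
    fix k y assume "y \<in> X"
    have pass: "(norm (z k m - y))\<^sup>2 \<le> (norm (z k 0 - y))\<^sup>2
        - 2 * gam k * (\<Sum>i<m. (f i (z k 0) + lam k / m * h (z k 0)) - (f i y + lam k / m * h y))
        + real m * (2 * real m + 1) * (gam k)\<^sup>2 * G\<^sup>2"
      using incremental_pass_inequality[where X = X and z = "z k" and t = "gam k" and G = G
          and s = "\<lambda>i. gf k i + (lam k / m) *\<^sub>R gh k i" and \<phi> = "\<lambda>i y. f i y + lam k / m * h y",
          OF closed_X X(3,1) z_in_X less_imp_le[OF gamma_pos] G(2) G(3) component_subgradient zstep \<open>y \<in> X\<close>]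
      by simp
    have sum: "(\<Sum>i<m. (f i a + lam k / m * h a) - (f i b + lam k / m * h b))
        = (F a + lam k * h a) - (F b + lam k * h b)" for a b
      using m by (simp add: sum_subtractf sum.distrib)
    have "real m * (2 * real m + 1) * (gam k)\<^sup>2 * G\<^sup>2 = real m * (2 * real m + 1) * G\<^sup>2 * (gam k)\<^sup>2"
      by (simp add: mult_ac)
    with pass[unfolded sum z0, folded xstep]
    show "(norm (x (Suc k) - y))\<^sup>2 \<le> (norm (x k - y))\<^sup>2
        - 2 * gam k * ((F (x k) + lam k * h (x k)) - (F y + lam k * h y))
        + real m * (2 * real m + 1) * G\<^sup>2 * (gam k)\<^sup>2"
      by linarith
  qed
qed

lemma contraction_towards_reg_min:
  obtains C where "C \<ge> 0"
    "\<And>k. (norm (x (Suc k) - reg_min k))\<^sup>2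
       \<le> (1 - gam k * lam k * \<mu> / 2) * (norm (x k - reg_min k))\<^sup>2 + C * (gam k)\<^sup>2"
proof -
  obtain C where C: "C \<ge> 0"
    "\<And>k y. y \<in> X \<Longrightarrow> (norm (x (Suc k) - y))\<^sup>2
       \<le> (norm (x k - y))\<^sup>2 - 2 * gam k * ((F (x k) + lam k * h (x k)) - (F y + lam k * h y)) + C * (gam k)\<^sup>2"
    using epoch_inequality by blast
  show ?thesis
  proof (rule that[OF C(1)])
    fix k
    define e where "e = (norm (x k - reg_min k))\<^sup>2"
    have "F (reg_min k) + lam k * h (reg_min k) + lam k * (\<mu> / 4) * e \<le> F (x k) + lam k * h (x k)"
      unfolding e_def by (rule reg_min_growth(2)[OF x_in_X])
    then have "2 * gam k * (lam k * (\<mu> / 4) * e)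
        \<le> 2 * gam k * ((F (x k) + lam k * h (x k)) - (F (reg_min k) + lam k * h (reg_min k)))"
      using gamma_pos[of k] by (intro mult_left_mono) auto
    moreover have "2 * gam k * (lam k * (\<mu> / 4) * e) = gam k * lam k * \<mu> / 2 * e" by simp
    moreover have "(1 - gam k * lam k * \<mu> / 2) * e = e - gam k * lam k * \<mu> / 2 * e"
      by (simp add: left_diff_distrib)
    ultimately show "(norm (x (Suc k) - reg_min k))\<^sup>2 \<le> (1 - gam k * lam k * \<mu> / 2) * e + C * (gam k)\<^sup>2"
      using C(2)[OF reg_min_growth(1), of k k] unfolding e_def by linarith
  qed
qed

lemma reg_min_drift:
  obtains D where "D \<ge> 0" "\<And>k. norm (reg_min k - reg_min (Suc k)) \<le> D * (lam k / lam (Suc k) - 1)"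
proof -
  obtain Lh where Lh: "Lh-lipschitz_on X h"
    using convex_on_compact_bounds[OF h_convex X(2)] by blast
  show ?thesis
  proof (rule that)
    show "0 \<le> Lh / (\<mu> / 4)" using lipschitz_on_nonneg[OF Lh] mu_pos by simp
    show "norm (reg_min k - reg_min (Suc k)) \<le> Lh / (\<mu> / 4) * (lam k / lam (Suc k) - 1)" for k
      using regularized_minimizers_drift[OF lambda_pos[of "Suc k"] decseq_SucD[OF lambda_mono]
          _ reg_min_growth(1)[where k = k] reg_min_growth(1)[where k = "Suc k"]
          reg_min_growth(2)[where k = k] reg_min_growth(2)[where k = "Suc k"] Lh] mu_pos
      by simp
  qed
qed

lemma tracking_error_recursion:
  obtains C D where "C \<ge> 0" "D \<ge> 0"
    "\<And>k. gam (Suc k) * lam (Suc k) * \<mu> / 2 \<le> 1 \<Longrightarrow>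
      (norm (x (Suc (Suc k)) - reg_min (Suc k)))\<^sup>2
      \<le> (1 - gam (Suc k) * lam (Suc k) * \<mu> / 4) * (norm (x (Suc k) - reg_min k))\<^sup>2
        + (3 * (D * (lam k / lam (Suc k) - 1))\<^sup>2 / (gam (Suc k) * lam (Suc k) * \<mu> / 2)
           + C * (gam (Suc k))\<^sup>2)"
proof -
  obtain C where C: "C \<ge> 0"
    "\<And>k. (norm (x (Suc k) - reg_min k))\<^sup>2
       \<le> (1 - gam k * lam k * \<mu> / 2) * (norm (x k - reg_min k))\<^sup>2 + C * (gam k)\<^sup>2"
    using contraction_towards_reg_min by blast
  obtain D where D: "D \<ge> 0" "\<And>k. norm (reg_min k - reg_min (Suc k)) \<le> D * (lam k / lam (Suc k) - 1)"
    using reg_min_drift by blast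
  show ?thesis
  proof (rule that[OF C(1) D(1)])
    fix k
    define a where "a = gam (Suc k) * lam (Suc k) * \<mu> / 2"
    define d where "d = norm (x (Suc k) - reg_min k)"
    define e where "e = D * (lam k / lam (Suc k) - 1)"
    assume "gam (Suc k) * lam (Suc k) * \<mu> / 2 \<le> 1"
    then have a: "0 < a" "a \<le> 1"
      using gamma_pos[of "Suc k"] lambda_pos[of "Suc k"] mu_pos by (simp_all add: a_def)
    have "0 \<le> e" unfolding e_def by (rule order_trans[OF norm_ge_zero D(2)])
    have "norm (x (Suc k) - reg_min (Suc k)) \<le> d + e"
      using norm_triangle_ineq[of "x (Suc k) - reg_min k" "reg_min k - reg_min (Suc k)"] D(2)[of k]
      by (simp add: d_def e_def)
    then have "(1 - a) * (norm (x (Suc k) - reg_min (Suc k)))\<^sup>2 \<le> (1 - a) * (d + e)\<^sup>2"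
      using a by (intro mult_left_mono power_mono) auto
    also have "\<dots> \<le> (1 - a / 2) * d\<^sup>2 + 3 * e\<^sup>2 / a"
      using contracted_square_sum_le[OF a _ \<open>0 \<le> e\<close>] by (simp add: d_def)
    finally have "(1 - a) * (norm (x (Suc k) - reg_min (Suc k)))\<^sup>2 \<le> (1 - a / 2) * d\<^sup>2 + 3 * e\<^sup>2 / a" .
    moreover have "(norm (x (Suc (Suc k)) - reg_min (Suc k)))\<^sup>2
        \<le> (1 - a) * (norm (x (Suc k) - reg_min (Suc k)))\<^sup>2 + C * (gam (Suc k))\<^sup>2"
      using C(2)[of "Suc k"] unfolding a_def .
    moreover have "(1 - a / 2) * d\<^sup>2 = (1 - gam (Suc k) * lam (Suc k) * \<mu> / 4) * d\<^sup>2"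
      by (simp add: a_def)
    ultimately show "(norm (x (Suc (Suc k)) - reg_min (Suc k)))\<^sup>2
      \<le> (1 - gam (Suc k) * lam (Suc k) * \<mu> / 4) * d\<^sup>2 + (3 * e\<^sup>2 / a + C * (gam (Suc k))\<^sup>2)"
      by linarith
  qed
qed

lemma eventually_small_steps:
  assumes "gam \<longlonglongrightarrow> 0"
  obtains N where "\<And>k. k \<ge> N \<Longrightarrow> gam (Suc k) * lam (Suc k) * \<mu> / 2 \<le> 1"
proof -
  have "(\<lambda>k. gam (Suc k) * (lam 0 * \<mu> / 2)) \<longlonglongrightarrow> 0"
    by (rule tendsto_mult_left_zero[OF LIMSEQ_Suc[OF assms]])
  then have "eventually (\<lambda>k. gam (Suc k) * (lam 0 * \<mu> / 2) < 1) sequentially"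
    using zero_less_one by (rule order_tendstoD(2))
  then obtain N where N: "\<And>k. k \<ge> N \<Longrightarrow> gam (Suc k) * (lam 0 * \<mu> / 2) < 1"
    unfolding eventually_sequentially by blast
  show ?thesis
  proof (rule that)
    fix k assume "k \<ge> N"
    have "lam (Suc k) * (\<mu> / 2) \<le> lam 0 * (\<mu> / 2)"
      using lambda_mono mu_pos by (intro mult_right_mono) (auto simp: decseq_def)
    then have "gam (Suc k) * (lam (Suc k) * (\<mu> / 2)) \<le> gam (Suc k) * (lam 0 * \<mu> / 2)"
      using gamma_pos[of "Suc k"] by (intro mult_left_mono) auto
    with N[OF \<open>k \<ge> N\<close>] show "gam (Suc k) * lam (Suc k) * \<mu> / 2 \<le> 1" by (simp add: mult.assoc)
  qed
qed

lemma tracking_error_tendsto_zero: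
  assumes not_summable: "\<not> summable (\<lambda>k. gam k * lam k)" and gam_lim: "gam \<longlonglongrightarrow> 0"
    and drift_ratio: "(\<lambda>k. 1 / ((gam (Suc k))\<^sup>2 * (lam (Suc k))\<^sup>2) * (lam k / lam (Suc k) - 1)\<^sup>2) \<longlonglongrightarrow> 0"
    and step_ratio: "(\<lambda>k. gam k / lam k) \<longlonglongrightarrow> 0"
  shows "(\<lambda>k. norm (x (Suc k) - reg_min k)) \<longlonglongrightarrow> 0"
proof -
  obtain C D where "C \<ge> 0" "D \<ge> 0" and recursion:
    "\<And>k. gam (Suc k) * lam (Suc k) * \<mu> / 2 \<le> 1 \<Longrightarrow>
      (norm (x (Suc (Suc k)) - reg_min (Suc k)))\<^sup>2
      \<le> (1 - gam (Suc k) * lam (Suc k) * \<mu> / 4) * (norm (x (Suc k) - reg_min k))\<^sup>2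
        + (3 * (D * (lam k / lam (Suc k) - 1))\<^sup>2 / (gam (Suc k) * lam (Suc k) * \<mu> / 2)
           + C * (gam (Suc k))\<^sup>2)"
    using tracking_error_recursion by blast
  define a where "a k = gam (Suc k) * lam (Suc k) * \<mu> / 4" for k
  define b where "b k = 3 * (D * (lam k / lam (Suc k) - 1))\<^sup>2 / (gam (Suc k) * lam (Suc k) * \<mu> / 2)
      + C * (gam (Suc k))\<^sup>2" for k
  have a_pos: "a k > 0" for k
    using gamma_pos[of "Suc k"] lambda_pos[of "Suc k"] mu_pos by (simp add: a_def)
  obtain N where small: "\<And>k. k \<ge> N \<Longrightarrow> gam (Suc k) * lam (Suc k) * \<mu> / 2 \<le> 1"
    using eventually_small_steps[OF gam_lim] by blast
  have "b k / a k = 24 * D\<^sup>2 / \<mu>\<^sup>2 * (1 / ((gam (Suc k))\<^sup>2 * (lam (Suc k))\<^sup>2) * (lam k / lam (Suc k) - 1)\<^sup>2)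
      + 4 * C / \<mu> * (gam (Suc k) / lam (Suc k))" for k
    using gamma_pos[of "Suc k"] lambda_pos[of "Suc k"] mu_pos
    unfolding a_def b_def by (simp add: field_simps power2_eq_square)
  moreover have "(\<lambda>k. 24 * D\<^sup>2 / \<mu>\<^sup>2 * (1 / ((gam (Suc k))\<^sup>2 * (lam (Suc k))\<^sup>2) * (lam k / lam (Suc k) - 1)\<^sup>2)
      + 4 * C / \<mu> * (gam (Suc k) / lam (Suc k))) \<longlonglongrightarrow> 24 * D\<^sup>2 / \<mu>\<^sup>2 * 0 + 4 * C / \<mu> * 0"
    by (intro tendsto_intros drift_ratio LIMSEQ_Suc[OF step_ratio])
  ultimately have ratio: "(\<lambda>k. b k / a k) \<longlonglongrightarrow> 0" by simp
  have "\<not> summable a"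
  proof
    assume "summable a"
    then have "summable (\<lambda>k. 4 / \<mu> * a k)" by (rule summable_mult)
    then have "summable (\<lambda>k. gam (Suc k) * lam (Suc k))" using mu_pos by (simp add: a_def)
    with not_summable show False using summable_Suc_iff[of "\<lambda>k. gam k * lam k"] by simp
  qed
  have "(\<lambda>k. (norm (x (Suc k) - reg_min k))\<^sup>2) \<longlonglongrightarrow> 0"
  proof (rule perturbed_contraction_tendsto_zero[OF _ a_pos \<open>\<not> summable a\<close> _ ratio])
    show "a k \<le> 1 \<and> (norm (x (Suc (Suc k)) - reg_min (Suc k)))\<^sup>2
          \<le> (1 - a k) * (norm (x (Suc k) - reg_min k))\<^sup>2 + b k" if "k \<ge> N" for k
      using recursion[OF small[OF that]] small[OF that] by (simp add: a_def b_def)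
  qed simp
  then show ?thesis
    using tendsto_real_sqrt[of _ 0] by fastforce
qed

lemma reg_min_tendsto_h_min:
  assumes "lam \<longlonglongrightarrow> 0"
  shows "reg_min \<longlonglongrightarrow> h_min"
proof (rule tikhonov_minimizers_tendsto[where F = F and h = h and X = X and lam = lam])
  show "F (reg_min k) + lam k * h (reg_min k) \<le> F y + lam k * h y" if "y \<in> X" for k y
  proof -
    have "0 \<le> lam k * (\<mu> / 4) * (norm (y - reg_min k))\<^sup>2"
      using lambda_pos[of k] mu_pos by simp
    with reg_min_growth(2)[OF that, of k] show ?thesis by linarith
  qed
  show "q = h_min" if "q \<in> argmin_set F X" "h q \<le> h h_min" for q
  proof -
    have "\<mu> / 4 * (norm (q - h_min))\<^sup>2 \<le> 0"
      using h_min_growth(2)[OF that(1)] that(2) by linarith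
    then show ?thesis using mu_pos by (simp add: mult_le_0_iff)
  qed
  show "continuous_on X F" "continuous_on X h"
    using F_continuous h_continuous by (auto intro: continuous_on_subset)
qed (fact X(2) reg_min_growth(1) assms lambda_pos h_min_growth(1))+

lemma iterates_track_reg_min:
  assumes "\<not> summable (\<lambda>k. gam k * lam k)" "gam \<longlonglongrightarrow> 0"
    "(\<lambda>k. 1 / ((gam (Suc k))\<^sup>2 * (lam (Suc k))\<^sup>2) * (lam k / lam (Suc k) - 1)\<^sup>2) \<longlonglongrightarrow> 0"
    "(\<lambda>k. gam k / lam k) \<longlonglongrightarrow> 0"
  shows "(\<lambda>k. norm (x k - the_argmin (\<lambda>y. F y + lam (k - 1) * h y) X)) \<longlonglongrightarrow> 0"
proof (rule LIMSEQ_imp_Suc)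
  show "(\<lambda>k. norm (x (Suc k) - the_argmin (\<lambda>y. F y + lam (Suc k - 1) * h y) X)) \<longlonglongrightarrow> 0"
    using tracking_error_tendsto_zero[OF assms] by (simp only: diff_Suc_1 reg_min_def)
qed

lemma iterates_tendsto_h_min:
  assumes "\<not> summable (\<lambda>k. gam k * lam k)" "gam \<longlonglongrightarrow> 0"
    "(\<lambda>k. 1 / ((gam (Suc k))\<^sup>2 * (lam (Suc k))\<^sup>2) * (lam k / lam (Suc k) - 1)\<^sup>2) \<longlonglongrightarrow> 0"
    "(\<lambda>k. gam k / lam k) \<longlonglongrightarrow> 0"
    and "lam \<longlonglongrightarrow> 0"
  shows "x \<longlonglongrightarrow> h_min"
proof (rule LIMSEQ_imp_Suc)
  have "(\<lambda>k. x (Suc k) - reg_min k) \<longlonglongrightarrow> 0"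
    using tracking_error_tendsto_zero[OF assms(1-4)] by (simp only: tendsto_norm_zero_iff)
  moreover have "(\<lambda>k. reg_min k - h_min) \<longlonglongrightarrow> 0"
    using LIM_zero[OF reg_min_tendsto_h_min[OF assms(5)]] .
  ultimately have "(\<lambda>k. (x (Suc k) - reg_min k) + (reg_min k - h_min)) \<longlonglongrightarrow> 0 + 0"
    by (rule tendsto_add)
  moreover have "u - v + (v - w) = u - w" for u v w :: 'a by simp
  ultimately show "(\<lambda>k. x (Suc k)) \<longlonglongrightarrow> h_min"
    by (simp only: add_0 LIM_zero_iff)
qed

end

theorem proposition1:
  fixes X :: "'a::euclidean_space set"
    and m :: nat
    and f :: "nat \<Rightarrow> 'a \<Rightarrow> real"
    and h :: "'a \<Rightarrow> real"
    and \<mu> :: real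
    and gam lam :: "nat \<Rightarrow> real"
    and x :: "nat \<Rightarrow> 'a"
    and z :: "nat \<Rightarrow> nat \<Rightarrow> 'a"
    and gf gh :: "nat \<Rightarrow> nat \<Rightarrow> 'a"
  assumes X: "X \<noteq> {}" "compact X" "convex X"
    and m: "m \<ge> 1"
    and f_cvx: "\<And>i. i < m \<Longrightarrow> convex_on UNIV (f i)"
    and mu_pos: "\<mu> > 0"
    and h_sc: "strongly_convex \<mu> h"
    \<comment> \<open>Assumption (A2)\<close>
    and gamma_pos: "\<And>k. gam k > 0"
    and lambda_pos: "\<And>k. lam k > 0"
    and gamma_mono: "decseq gam"
    and lambda_mono: "decseq lam"
    and A2a: "gam 0 * lam 0 \<le> 2 * real m / \<mu>"
    and A2b: "\<not> summable (\<lambda>k. gam k * lam k)"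
    and A2c: "summable (\<lambda>k. 1 / (gam (Suc k) * lam (Suc k)) * (lam k / lam (Suc k) - 1)\<^sup>2)"
    and A2d: "summable (\<lambda>k. (gam k)\<^sup>2)"
    and A2e: "(\<lambda>k. 1 / ((gam (Suc k))\<^sup>2 * (lam (Suc k))\<^sup>2) * (lam k / lam (Suc k) - 1)\<^sup>2) \<longlonglongrightarrow> 0"
    and A2f: "(\<lambda>k. gam k / lam k) \<longlonglongrightarrow> 0"
    \<comment> \<open>IR-IG method; component f i here is f_{i+1} in the paper\<close>
    and x0: "x 0 \<in> X"
    and z0: "\<And>k. z k 0 = x k"
    and gf: "\<And>k i. i < m \<Longrightarrow> gf k i \<in> subdiff (f i) (z k i)"
    and gh: "\<And>k i. i < m \<Longrightarrow> gh k i \<in> subdiff h (z k i)"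
    and zstep: "\<And>k i. i < m \<Longrightarrow> z k (Suc i) =
        closest_point X (z k i - gam k *\<^sub>R (gf k i + (lam k / real m) *\<^sub>R gh k i))"
    and xstep: "\<And>k. x (Suc k) = z k m"
  shows "((\<lambda>k. norm (x k - the_argmin (\<lambda>y. (\<Sum>i<m. f i y) + lam (k - 1) * h y) X)) \<longlonglongrightarrow> 0)
         \<and> (lam \<longlonglongrightarrow> 0 \<longrightarrow>
              x \<longlonglongrightarrow> the_argmin h (argmin_set (\<lambda>y. \<Sum>i<m. f i y) X))"
proof -
  interpret ir_ig X m f h \<mu> gam lam x z gf gh
    by unfold_locales (fact X m f_cvx mu_pos h_sc gamma_pos lambda_pos lambda_mono x0 z0 gf gh zstep xstep)+
  have "(\<lambda>k. \<bar>gam k\<bar>) \<longlonglongrightarrow> 0"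
    using tendsto_real_sqrt[OF summable_LIMSEQ_zero[OF A2d]] by (simp only: real_sqrt_abs real_sqrt_zero)
  then have gam_lim: "gam \<longlonglongrightarrow> 0" by (simp only: tendsto_rabs_zero_iff)
  show ?thesis
  proof (intro conjI impI)
    show "(\<lambda>k. norm (x k - the_argmin (\<lambda>y. (\<Sum>i<m. f i y) + lam (k - 1) * h y) X)) \<longlonglongrightarrow> 0"
      by (rule iterates_track_reg_min[OF A2b gam_lim A2e A2f])
    show "x \<longlonglongrightarrow> the_argmin h (argmin_set (\<lambda>y. \<Sum>i<m. f i y) X)" if "lam \<longlonglongrightarrow> 0"
      using iterates_tendsto_h_min[OF A2b gam_lim A2e A2f that] unfolding h_min_def .
  qed
qed

end
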